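(* Let $(X,G)$ be a symmetric $G$-metric space and let $T:X\to X$. Suppose that $X$ is $T$-orbitally complete, that $T$ is orbitally continuous and injective, and that there exist a real number $q<1$ and a non-negative real-valued function $a:X\times X\times X\to[0,\infty)$ such that for all $x,y,z\in X$ with $x\neq y$, \[ G(Tx,Ty,Tz) < q\cdot \max\Big\{ G(x,y,z),\ a(x,y,z)\,G(Tx,y,z)\,G(x,Ty,z)\,G(x,y,Tz),\ [G(x,y,z)\,G(Tx,Ty,Tz)]^{-1}G(x,Tx,Tx)\,G(y,Ty,Ty)\,G(z,Tz,Tz) \Big\}. \] Then for each $x\in X$ the sequence $(T^nx)$ $G$-converges to some $u_x\in X$ and $Tu_x=u_x$. If in addition $a(x,y,z)\leq [G(x,y,z)G(Tx,Ty,Tz)]^{-1}$ (for all $x,y,z\in X$ with $x\ne y$), then $T$ has a unique fixed point.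
   Context: A $G$-metric space is a nonempty set $X$ with a function $G:X\times X\times X\to[0,\infty)$ such that: (G1) $G(x,y,z)=0$ if $x=y=z$; (G2) $G(x,x,y)>0$ whenever $x\neq y$; (G3) $G(x,x,y)\le G(x,y,z)$ whenever $z\neq y$; (G4) $G$ is symmetric in all three variables; (G5) $G(x,y,z)\le G(x,a,a)+G(a,y,z)$ for all $x,y,z,a\in X$. It is symmetric if $G(x,y,y)=G(x,x,y)$ for all $x,y$. A sequence $(x_n)$ $G$-converges to $x$ if $G(x,x_n,x_m)\to 0$ as $n,m\to\infty$ (equivalently $G(x_n,x,x)\to0$); it is $G$-Cauchy if for every $\varepsilon>0$ there is $N$ with $G(x_n,x_m,x_m)<\varepsilon$ for all $n,m\ge N$. For $a\in X$ let $I(a,T)=\{a,Ta,T^2a,\dots\}$. $T$ is orbitally continuous if whenever $T^{n_i}x\to x^*$ ($G$-convergence) for some $x$ and some increasing sequence $(n_i)$, then $TT^{n_i}x\to Tx^*$. $X$ is $T$-orbitally complete if for every $a\in X$, every $G$-Cauchy sequence contained in $I(a,T)$ $G$-converges in $X$. *)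

theory Defs
  imports Complex_Main
begin

definition G_metric :: "('a \<Rightarrow> 'a \<Rightarrow> 'a \<Rightarrow> real) \<Rightarrow> bool" where
  "G_metric G \<longleftrightarrow>
     (\<forall>x y z. G x y z \<ge> 0) \<and>
     (\<forall>x. G x x x = 0) \<and>
     (\<forall>x y. x \<noteq> y \<longrightarrow> G x x y > 0) \<and>
     (\<forall>x y z. z \<noteq> y \<longrightarrow> G x x y \<le> G x y z) \<and>
     (\<forall>x y z. G x y z = G x z y \<and> G x y z = G y x z \<and> G x y z = G y z x
              \<and> G x y z = G z x y \<and> G x y z = G z y x) \<and>
     (\<forall>x y z a. G x y z \<le> G x a a + G a y z)"

definition G_symmetric :: "('a \<Rightarrow> 'a \<Rightarrow> 'a \<Rightarrow> real) \<Rightarrow> bool" where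
  "G_symmetric G \<longleftrightarrow> (\<forall>x y. G x y y = G x x y)"

definition G_converges :: "('a \<Rightarrow> 'a \<Rightarrow> 'a \<Rightarrow> real) \<Rightarrow> (nat \<Rightarrow> 'a) \<Rightarrow> 'a \<Rightarrow> bool" where
  "G_converges G s x \<longleftrightarrow>
     (\<forall>\<epsilon>>0. \<exists>N. \<forall>n m. N \<le> n \<longrightarrow> N \<le> m \<longrightarrow> G x (s n) (s m) < \<epsilon>)"

definition G_Cauchy :: "('a \<Rightarrow> 'a \<Rightarrow> 'a \<Rightarrow> real) \<Rightarrow> (nat \<Rightarrow> 'a) \<Rightarrow> bool" where
  "G_Cauchy G s \<longleftrightarrow>
     (\<forall>\<epsilon>>0. \<exists>N. \<forall>n m. N \<le> n \<longrightarrow> N \<le> m \<longrightarrow> G (s n) (s m) (s m) < \<epsilon>)"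

definition orbit :: "('a \<Rightarrow> 'a) \<Rightarrow> 'a \<Rightarrow> 'a set" where
  "orbit T a = {(T ^^ n) a | n. True}"

definition orbitally_continuous :: "('a \<Rightarrow> 'a \<Rightarrow> 'a \<Rightarrow> real) \<Rightarrow> ('a \<Rightarrow> 'a) \<Rightarrow> bool" where
  "orbitally_continuous G T \<longleftrightarrow>
     (\<forall>x xs (n :: nat \<Rightarrow> nat). strict_mono n \<longrightarrow>
        G_converges G (\<lambda>i. (T ^^ n i) x) xs \<longrightarrow>
        G_converges G (\<lambda>i. T ((T ^^ n i) x)) (T xs))"

definition orbitally_complete :: "('a \<Rightarrow> 'a \<Rightarrow> 'a \<Rightarrow> real) \<Rightarrow> ('a \<Rightarrow> 'a) \<Rightarrow> bool" where
  "orbitally_complete G T \<longleftrightarrow>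
     (\<forall>a s. (\<forall>k. s k \<in> orbit T a) \<longrightarrow> G_Cauchy G s \<longrightarrow> (\<exists>x. G_converges G s x))"

end

theory Submission
  imports Defs
begin

text \<open>Put \<open>x(n) = T\<^sup>n x\<close> and \<open>d(n) = G(x(n), x(n+1), x(n+1))\<close>, where \<open>Tx \<noteq> x\<close>, so that
  consecutive terms differ by injectivity. On the triple \<open>(x(n), x(n+1), x(n+1))\<close> the middle
  term of the maximum contains the factor \<open>G(x(n+1), x(n+1), x(n+1)) = 0\<close> and the last one
  collapses to \<open>d(n+1)\<close>, so as \<open>q < 1\<close> the condition forces \<open>d(n+1) < q d(n)\<close>. The orbit is
  therefore Cauchy, converges by orbital completeness, and its limit is fixed by orbital
  continuity and uniqueness of limits. At distinct fixed points \<open>u, v\<close> the extra bound on \<open>a\<close>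
  makes the maximum for \<open>(u, v, v)\<close> equal to \<open>G(u, v, v)\<close>, contradicting \<open>q < 1\<close>.\<close>

locale G_metric_space =
  fixes G :: "'a \<Rightarrow> 'a \<Rightarrow> 'a \<Rightarrow> real"
  assumes G_metric: "G_metric G"
begin

lemma G_self [simp]: "G x x x = 0"
  using G_metric unfolding G_metric_def by blast

lemma G_swap12: "G x y z = G y x z"
  using G_metric unfolding G_metric_def by blast

lemma G_swap23: "G x y z = G x z y"
  using G_metric unfolding G_metric_def by blast

lemma G_triangle: "G x y z \<le> G x w w + G w y z"
  using G_metric unfolding G_metric_def by blast

lemma G_pos: "x \<noteq> y \<Longrightarrow> 0 < G x y y"
  using G_metric G_swap12 G_swap23 unfolding G_metric_def by metis

lemma G_converges_const: "G_converges G (\<lambda>n. x) x"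
  unfolding G_converges_def by simp

lemma G_converges_Suc: "G_converges G s u \<Longrightarrow> G_converges G (\<lambda>n. s (Suc n)) u"
  unfolding G_converges_def by (meson le_Suc_eq)

lemma G_chain_le_sum:
  "G (s n) (s (n + k)) (s (n + k))
     \<le> (\<Sum>i<k. G (s (n + i)) (s (Suc (n + i))) (s (Suc (n + i))))"
proof (induction k)
  case (Suc k)
  have "G (s n) (s (n + Suc k)) (s (n + Suc k))
          \<le> G (s n) (s (n + k)) (s (n + k)) + G (s (n + k)) (s (Suc (n + k))) (s (Suc (n + k)))"
    using G_triangle[of "s n" "s (n + Suc k)" "s (n + Suc k)" "s (n + k)"] by simp
  with Suc.IH show ?case by simp
qed simp

end

locale symmetric_G_metric_space = G_metric_space +
  assumes G_symmetric: "G_symmetric G"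
begin

lemma G_swap: "G x y y = G y x x"
  using G_symmetric G_swap12 G_swap23 unfolding G_symmetric_def by metis

lemma G_converges_unique:
  assumes "G_converges G s u" and "G_converges G s v"
  shows "u = v"
proof (rule ccontr)
  assume "u \<noteq> v"
  define e where "e = G u v v / 2"
  have "e > 0" using G_pos[OF \<open>u \<noteq> v\<close>] by (simp add: e_def)
  obtain N1 where N1: "\<And>n. N1 \<le> n \<Longrightarrow> G u (s n) (s n) < e"
    using assms(1) \<open>e > 0\<close> unfolding G_converges_def by blast
  obtain N2 where N2: "\<And>n. N2 \<le> n \<Longrightarrow> G v (s n) (s n) < e"
    using assms(2) \<open>e > 0\<close> unfolding G_converges_def by blast
  define n where "n = max N1 N2"
  have "G u v v \<le> G u (s n) (s n) + G v (s n) (s n)"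
    using G_triangle[of u v v "s n"] G_swap by simp
  moreover have "G u (s n) (s n) < e" "G v (s n) (s n) < e"
    using N1 N2 by (simp_all add: n_def)
  ultimately show False by (simp add: e_def)
qed

lemma G_Cauchy_if_geometric:
  assumes "0 \<le> q" and "q < 1"
    and bound: "\<And>n. G (s n) (s (Suc n)) (s (Suc n)) \<le> c * q ^ n"
  shows "G_Cauchy G s"
proof -
  define B where "B = c / (1 - q)"
  have "0 \<le> c" using bound[of 0] G_pos[of "s 0" "s 1"] by (cases "s 0 = s 1") auto
  have tail: "G (s n) (s (n + k)) (s (n + k)) \<le> B * q ^ n" for n k
  proof -
    have "(\<Sum>i<k. q ^ i) \<le> (\<Sum>i. q ^ i)"
      using assms(1,2) by (intro sum_le_suminf summable_geometric) auto
    also have "\<dots> = 1 / (1 - q)"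
      using assms(1,2) by (intro suminf_geometric) auto
    finally have "c * q ^ n * (\<Sum>i<k. q ^ i) \<le> c * q ^ n * (1 / (1 - q))"
      using \<open>0 \<le> c\<close> assms(1) by (intro mult_left_mono) auto
    moreover have "G (s n) (s (n + k)) (s (n + k)) \<le> (\<Sum>i<k. c * q ^ (n + i))"
      using G_chain_le_sum[of s n k] bound by (meson order_trans sum_mono)
    ultimately show ?thesis
      by (simp add: B_def power_add sum_distrib_left mult.assoc)
  qed
  have dist: "G (s n) (s m) (s m) \<le> B * q ^ min n m" for n m
  proof (cases "n \<le> m")
    case True
    then show ?thesis using tail[of n "m - n"] by simp
  next
    case False
    then show ?thesis using tail[of m "n - m"] G_swap[of "s n" "s m"] by simp
  qed
  show ?thesis
    unfolding G_Cauchy_def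
  proof (intro allI impI)
    fix e :: real
    assume "e > 0"
    have "(\<lambda>N. B * q ^ N) \<longlonglongrightarrow> 0"
      using assms(1,2) by (intro tendsto_mult_right_zero LIMSEQ_power_zero) auto
    then have "\<forall>\<^sub>F n in sequentially. B * q ^ n < e"
      using \<open>e > 0\<close> by (rule order_tendstoD)
    then obtain N where N: "\<And>n. N \<le> n \<Longrightarrow> B * q ^ n < e"
      unfolding eventually_sequentially by blast
    have "G (s n) (s m) (s m) < e" if "N \<le> n" "N \<le> m" for n m
      using dist[of n m] N[of "min n m"] that by simp
    then show "\<exists>N. \<forall>n m. N \<le> n \<longrightarrow> N \<le> m \<longrightarrow> G (s n) (s m) (s m) < e" by blast
  qed
qed

lemma orbit_limit_is_fixed_point:
  assumes "orbitally_continuous G T" and u: "G_converges G (\<lambda>n. (T ^^ n) x) u"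
  shows "T u = u"
proof -
  have "strict_mono (\<lambda>n::nat. n)" by (simp add: strict_mono_def)
  then have "G_converges G (\<lambda>n. (T ^^ Suc n) x) (T u)"
    using assms unfolding orbitally_continuous_def by simp
  moreover have "G_converges G (\<lambda>n. (T ^^ Suc n) x) u"
    using G_converges_Suc[OF u] by simp
  ultimately show ?thesis by (rule G_converges_unique)
qed

end

definition rational_G_contraction ::
    "('a \<Rightarrow> 'a \<Rightarrow> 'a \<Rightarrow> real) \<Rightarrow> ('a \<Rightarrow> 'a) \<Rightarrow> ('a \<Rightarrow> 'a \<Rightarrow> 'a \<Rightarrow> real) \<Rightarrow> real \<Rightarrow> bool" where
  "rational_G_contraction G T a q \<longleftrightarrow>
     (\<forall>x y z. x \<noteq> y \<longrightarrow>
        G (T x) (T y) (T z) < q * Max {G x y z,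
           a x y z * G (T x) y z * G x (T y) z * G x y (T z),
           inverse (G x y z * G (T x) (T y) (T z)) * G x (T x) (T x) * G y (T y) (T y) * G z (T z) (T z)})"

context G_metric_space
begin

lemma contraction_orbit_step:
  assumes contr: "rational_G_contraction G T a q" and "q < 1"
    and "x \<noteq> T x" and "T x \<noteq> T (T x)"
  shows "G (T x) (T (T x)) (T (T x)) < q * G x (T x) (T x)"
proof -
  define d0 d1 where "d0 = G x (T x) (T x)" and "d1 = G (T x) (T (T x)) (T (T x))"
  have "0 < d0" "0 < d1" using G_pos assms(3,4) by (auto simp: d0_def d1_def)
  have "inverse (d0 * d1) * d0 * d1 * d1 = d1"
    using \<open>0 < d0\<close> \<open>0 < d1\<close> by (simp add: field_simps)
  then have "d1 < q * Max {d0, 0, d1}"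
    using contr assms(3) unfolding rational_G_contraction_def d0_def d1_def
    by (metis G_self mult_zero_left mult_zero_right)
  then have "d1 < q * max d0 (max 0 d1)"
    by (simp add: max.commute max.left_commute)
  moreover have "\<not> d1 < q * d1" using \<open>q < 1\<close> \<open>0 < d1\<close> by simp
  ultimately show ?thesis
    using \<open>0 < d1\<close> by (auto simp: d0_def d1_def max_def split: if_splits)
qed

lemma contraction_fixed_point_unique:
  assumes contr: "rational_G_contraction G T a q" and "q < 1"
    and "T u = u" and "T v = v"
    and a_bound: "u \<noteq> v \<Longrightarrow> a u v v \<le> inverse (G u v v * G u v v)"
  shows "u = v"
proof (rule ccontr)
  assume "u \<noteq> v"
  define g where "g = G u v v"
  have "0 < g" using G_pos[OF \<open>u \<noteq> v\<close>] by (simp add: g_def)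
  have "a u v v * g * g * g \<le> inverse (g * g) * g * g * g"
    using a_bound[OF \<open>u \<noteq> v\<close>] \<open>0 < g\<close> by (simp add: g_def mult_right_mono)
  also have "\<dots> = g" using \<open>0 < g\<close> by (simp add: field_simps)
  finally have "Max {g, a u v v * g * g * g, inverse (g * g) * 0 * 0 * 0} = g"
    using \<open>0 < g\<close> by (simp add: max_def)
  moreover have "g < q * Max {g, a u v v * g * g * g, inverse (g * g) * 0 * 0 * 0}"
    using contr \<open>u \<noteq> v\<close> assms(3,4) unfolding rational_G_contraction_def g_def
    by (metis G_self)
  ultimately show False using \<open>q < 1\<close> \<open>0 < g\<close> by simp
qed

end

lemma inj_funpow_orbit_step_neq:
  assumes "inj T" and "T x \<noteq> x"
  shows "(T ^^ n) x \<noteq> (T ^^ Suc n) x"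
  using assms by (induction n) (auto dest: injD)

context symmetric_G_metric_space
begin

lemma contraction_orbit_converges_to_fixed_point:
  assumes "orbitally_complete G T" and "orbitally_continuous G T" and "inj T"
    and contr: "rational_G_contraction G T a q" and "q < 1"
  shows "\<exists>u. G_converges G (\<lambda>n. (T ^^ n) x) u \<and> T u = u"
proof (cases "T x = x")
  case True
  then have "(T ^^ n) x = x" for n by (induction n) auto
  then have "(\<lambda>n. (T ^^ n) x) = (\<lambda>n. x)" by simp
  then show ?thesis using True G_converges_const by metis
next
  case False
  define s where "s n = (T ^^ n) x" for n
  define d where "d n = G (s n) (s (Suc n)) (s (Suc n))" for n
  have neq: "s n \<noteq> s (Suc n)" for n
    using inj_funpow_orbit_step_neq[OF \<open>inj T\<close> False] by (simp add: s_def)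
  have step: "d (Suc n) < q * d n" for n
    using contraction_orbit_step[OF contr \<open>q < 1\<close>, of "s n"] neq[of n] neq[of "Suc n"]
    by (simp add: d_def s_def)
  have "0 < q * d 0"
    using step[of 0] G_pos[OF neq[of 1]] by (simp add: d_def)
  then have "0 < q"
    using G_pos[OF neq[of 0]] by (simp add: d_def zero_less_mult_iff)
  have "d n \<le> d 0 * q ^ n" for n
  proof (induction n)
    case (Suc n)
    have "q * d n \<le> q * (d 0 * q ^ n)"
      using Suc.IH \<open>0 < q\<close> by (simp add: mult_left_mono)
    then show ?case using step[of n] by (simp add: algebra_simps)
  qed simp
  then have "G_Cauchy G s"
    using G_Cauchy_if_geometric[of q s "d 0"] \<open>0 < q\<close> \<open>q < 1\<close> by (simp add: d_def)
  moreover have "\<forall>k. s k \<in> orbit T x" unfolding orbit_def s_def by blast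
  ultimately obtain u where "G_converges G s u"
    using assms(1) unfolding orbitally_complete_def by blast
  then have "G_converges G (\<lambda>n. (T ^^ n) x) u"
    by (simp add: s_def[abs_def])
  with orbit_limit_is_fixed_point[OF assms(2)] show ?thesis by blast
qed

end

theorem theorem1:
  fixes G :: "'a \<Rightarrow> 'a \<Rightarrow> 'a \<Rightarrow> real"
    and T :: "'a \<Rightarrow> 'a"
    and a :: "'a \<Rightarrow> 'a \<Rightarrow> 'a \<Rightarrow> real"
    and q :: real
  assumes "G_metric G" and "G_symmetric G"
    and "orbitally_complete G T" and "orbitally_continuous G T" and "inj T"
    and "q < 1"
    and "\<forall>x y z. a x y z \<ge> 0"
    and "\<forall>x y z. x \<noteq> y \<longrightarrow>
           G (T x) (T y) (T z) < q * Max {G x y z,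
              a x y z * G (T x) y z * G x (T y) z * G x y (T z),
              inverse (G x y z * G (T x) (T y) (T z)) * G x (T x) (T x) * G y (T y) (T y) * G z (T z) (T z)}"
  shows "(\<forall>x. \<exists>u. G_converges G (\<lambda>n. (T ^^ n) x) u \<and> T u = u) \<and>
         ((\<forall>x y z. x \<noteq> y \<longrightarrow> a x y z \<le> inverse (G x y z * G (T x) (T y) (T z)))
            \<longrightarrow> (\<exists>!u. T u = u))"
proof -
  interpret symmetric_G_metric_space G
    using assms(1,2) by unfold_locales
  have contr: "rational_G_contraction G T a q"
    using assms(8) unfolding rational_G_contraction_def .
  have fixed: "\<forall>x. \<exists>u. G_converges G (\<lambda>n. (T ^^ n) x) u \<and> T u = u"
    using contraction_orbit_converges_to_fixed_point[OF assms(3-5) contr assms(6)] by blast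
  moreover have "\<exists>!u. T u = u"
    if a_bound: "\<forall>x y z. x \<noteq> y \<longrightarrow> a x y z \<le> inverse (G x y z * G (T x) (T y) (T z))"
  proof -
    obtain u where "T u = u" using fixed by blast
    moreover have "v = u" if "T v = v" for v
      using contraction_fixed_point_unique[OF contr assms(6) \<open>T v = v\<close> \<open>T u = u\<close>]
        \<open>T u = u\<close> \<open>T v = v\<close> a_bound by metis
    ultimately show ?thesis by blast
  qed
  ultimately show ?thesis by blast
qed

end
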